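(* Let $\Gamma$ be a metric graph and let $F$ be a subbundle of a vector bundle $E$ on $\Gamma$. Then there exists another subbundle $H$ of $E$ such that $E\simeq F\oplus H$.
   Context: A vector bundle of rank $n$ on a metric graph $\Gamma$ is a torsor under the sheaf of groups $S_n\ltimes\mathcal{H}_\Gamma^n$, where $\mathcal{H}_\Gamma$ is the sheaf of harmonic functions (piecewise linear with integer slopes and zero Laplacian) and $S_n$ permutes factors. With respect to an oriented simple model of $\Gamma$ and its star cover, it is described by transition matrices $g^e$ on the edges $e$ with entries in $\mathbb{T}=\mathbb{R}\cup\{\infty\}$ having exactly one finite entry in each row and column, the finite entries being affine functions with integer slope on $e$; two bundles are isomorphic iff their transition data are cohomologous. The direct sum $E\oplus F$ has block-diagonal transition matrices $\begin{bmatrix} g^e&\infty\\ \infty& h^e\end{bmatrix}$. A rank-$m$ bundle $F$ ($m\le n$) is a subbundle of the rank-$n$ bundle $E$ if transition matrices $h^e$ of $F$ and $g^e$ of $E$ can be chosen with $g^e=\begin{bmatrix} h^e&\ast\\ \infty&\ast\end{bmatrix}$ for all edges $e$. *)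

theory Defs
  imports Main "HOL-Library.Extended_Real"
begin

text \<open>A metric graph is presented by an oriented simple model: finitely many vertices,
finitely many edges, each edge e oriented from msrc e to mtgt e and of length mlen e > 0;
no loops, no multiple edges, and the graph is connected.\<close>

record ('v, 'e) osmodel =
  mV :: "'v set"
  mE :: "'e set"
  msrc :: "'e \<Rightarrow> 'v"
  mtgt :: "'e \<Rightarrow> 'v"
  mlen :: "'e \<Rightarrow> real"

definition adjacent :: "('v, 'e) osmodel \<Rightarrow> 'v \<Rightarrow> 'v \<Rightarrow> bool" where
  "adjacent G x y \<longleftrightarrow> (\<exists>e\<in>mE G. {msrc G e, mtgt G e} = {x, y})"

definition oriented_simple_model :: "('v, 'e) osmodel \<Rightarrow> bool" where
  "oriented_simple_model G \<longleftrightarrow>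
     finite (mV G) \<and> finite (mE G) \<and> mV G \<noteq> {} \<and>
     (\<forall>e\<in>mE G. msrc G e \<in> mV G \<and> mtgt G e \<in> mV G \<and> msrc G e \<noteq> mtgt G e \<and> mlen G e > 0) \<and>
     (\<forall>e\<in>mE G. \<forall>e'\<in>mE G. {msrc G e, mtgt G e} = {msrc G e', mtgt G e'} \<longrightarrow> e = e') \<and>
     (\<forall>x\<in>mV G. \<forall>y\<in>mV G. (adjacent G)\<^sup>*\<^sup>* x y)"

text \<open>Points of the metric graph: a vertex, or the point of edge e at parameter t
(measured from msrc e; interior points have 0 < t < mlen e).\<close>

datatype ('v, 'e) gpoint = Vtx 'v | Ept 'e real

definition incident :: "('v, 'e) osmodel \<Rightarrow> 'v \<Rightarrow> 'e set" where
  "incident G v = {e \<in> mE G. msrc G e = v \<or> mtgt G e = v}"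

definition open_edge :: "('v, 'e) osmodel \<Rightarrow> 'e \<Rightarrow> ('v, 'e) gpoint set" where
  "open_edge G e = {Ept e t | t. 0 < t \<and> t < mlen G e}"

text \<open>The open star of v (the open sets of the star cover).\<close>
definition star :: "('v, 'e) osmodel \<Rightarrow> 'v \<Rightarrow> ('v, 'e) gpoint set" where
  "star G v = {Vtx v} \<union> (\<Union>e\<in>incident G v. open_edge G e)"

definition dist_from :: "('v, 'e) osmodel \<Rightarrow> 'v \<Rightarrow> 'e \<Rightarrow> real \<Rightarrow> real" where
  "dist_from G v e t = (if msrc G e = v then t else mlen G e - t)"

text \<open>Harmonic functions on the open star of v: piecewise linear with integer slopes and
zero Laplacian, i.e. linear with integer (outgoing) slope on each open edge, continuous at v,
and outgoing slopes at v summing to zero.\<close>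
definition harmonic_on_star :: "('v, 'e) osmodel \<Rightarrow> 'v \<Rightarrow> (('v, 'e) gpoint \<Rightarrow> real) \<Rightarrow> bool" where
  "harmonic_on_star G v f \<longleftrightarrow>
     (\<exists>c::real. \<exists>m::'e \<Rightarrow> int.
        (\<Sum>e\<in>incident G v. m e) = 0 \<and> f (Vtx v) = c \<and>
        (\<forall>e\<in>incident G v. \<forall>t. 0 < t \<and> t < mlen G e \<longrightarrow>
            f (Ept e t) = c + of_int (m e) * dist_from G v e t))"

text \<open>Entries are T-valued functions (T = R \<union> {\<infinity>}, realised inside ereal; -\<infinity> never occurs).
Matrices are indexed by natural numbers; only indices below the rank matter.\<close>

type_synonym ('v, 'e) tmat = "nat \<Rightarrow> nat \<Rightarrow> ('v, 'e) gpoint \<Rightarrow> ereal"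

definition is_infinite_on :: "'p set \<Rightarrow> ('p \<Rightarrow> ereal) \<Rightarrow> bool" where
  "is_infinite_on S f \<longleftrightarrow> (\<forall>p\<in>S. f p = \<infinity>)"

definition monomial_mat :: "nat \<Rightarrow> 'p set \<Rightarrow> (('p \<Rightarrow> ereal) \<Rightarrow> bool) \<Rightarrow> (nat \<Rightarrow> nat \<Rightarrow> 'p \<Rightarrow> ereal) \<Rightarrow> bool" where
  "monomial_mat n S P A \<longleftrightarrow>
     (\<forall>i<n. \<forall>j<n. is_infinite_on S (A i j) \<or> P (A i j)) \<and>
     (\<forall>i<n. \<exists>!j. j < n \<and> \<not> is_infinite_on S (A i j)) \<and>
     (\<forall>j<n. \<exists>!i. i < n \<and> \<not> is_infinite_on S (A i j))"

definition tprod :: "nat \<Rightarrow> (nat \<Rightarrow> nat \<Rightarrow> 'p \<Rightarrow> ereal) \<Rightarrow> (nat \<Rightarrow> nat \<Rightarrow> 'p \<Rightarrow> ereal) \<Rightarrow> (nat \<Rightarrow> nat \<Rightarrow> 'p \<Rightarrow> ereal)" where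
  "tprod n A B = (\<lambda>i j p. INF k\<in>{..<n}. A i k p + B k j p)"

definition int_affine_on_edge :: "('v, 'e) osmodel \<Rightarrow> 'e \<Rightarrow> (('v, 'e) gpoint \<Rightarrow> ereal) \<Rightarrow> bool" where
  "int_affine_on_edge G e f \<longleftrightarrow>
     (\<exists>a::real. \<exists>m::int. \<forall>t. 0 < t \<and> t < mlen G e \<longrightarrow> f (Ept e t) = ereal (a + of_int m * t))"

text \<open>Transition data of a rank-n vector bundle w.r.t. the model and its star cover.\<close>
definition trans_data :: "('v, 'e) osmodel \<Rightarrow> nat \<Rightarrow> ('e \<Rightarrow> ('v, 'e) tmat) \<Rightarrow> bool" where
  "trans_data G n g \<longleftrightarrow>
     (\<forall>e\<in>mE G. monomial_mat n (open_edge G e) (int_affine_on_edge G e) (g e))"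

text \<open>Sections of S_n \<ltimes> H^n over the star of v, written as monomial matrices of harmonic functions.\<close>
definition star_section :: "('v, 'e) osmodel \<Rightarrow> nat \<Rightarrow> 'v \<Rightarrow> ('v, 'e) tmat \<Rightarrow> bool" where
  "star_section G n v \<phi> \<longleftrightarrow>
     monomial_mat n (star G v)
       (\<lambda>f. \<exists>h. harmonic_on_star G v h \<and> (\<forall>p\<in>star G v. f p = ereal (h p))) \<phi>"

text \<open>Cohomologous transition data (= isomorphic bundles): g' ^e \<odot> \<phi>_src = \<phi>_tgt \<odot> g^e
on every edge, for a 0-cochain \<phi>.\<close>
definition cohomologous :: "('v, 'e) osmodel \<Rightarrow> nat \<Rightarrow> ('e \<Rightarrow> ('v, 'e) tmat) \<Rightarrow> ('e \<Rightarrow> ('v, 'e) tmat) \<Rightarrow> bool" where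
  "cohomologous G n g g' \<longleftrightarrow>
     (\<exists>\<phi>. (\<forall>v\<in>mV G. star_section G n v (\<phi> v)) \<and>
          (\<forall>e\<in>mE G. \<forall>p\<in>open_edge G e. \<forall>i<n. \<forall>j<n.
              tprod n (g' e) (\<phi> (msrc G e)) i j p = tprod n (\<phi> (mtgt G e)) (g e) i j p))"

definition dsum :: "nat \<Rightarrow> ('e \<Rightarrow> ('v, 'e) tmat) \<Rightarrow> ('e \<Rightarrow> ('v, 'e) tmat) \<Rightarrow> ('e \<Rightarrow> ('v, 'e) tmat)" where
  "dsum m g h = (\<lambda>e i j. if i < m \<and> j < m then g e i j
                         else if m \<le> i \<and> m \<le> j then h e (i - m) (j - m)
                         else (\<lambda>_. \<infinity>))"

definition subbundle :: "('v, 'e) osmodel \<Rightarrow> nat \<Rightarrow> ('e \<Rightarrow> ('v, 'e) tmat) \<Rightarrow> nat \<Rightarrow> ('e \<Rightarrow> ('v, 'e) tmat) \<Rightarrow> bool" where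
  "subbundle G m f n g \<longleftrightarrow> m \<le> n \<and>
     (\<exists>f' g'. trans_data G m f' \<and> trans_data G n g' \<and>
        cohomologous G m f f' \<and> cohomologous G n g g' \<and>
        (\<forall>e\<in>mE G. \<forall>p\<in>open_edge G e. \<forall>i<m. \<forall>j<m. g' e i j p = f' e i j p) \<and>
        (\<forall>e\<in>mE G. \<forall>p\<in>open_edge G e. \<forall>i j. m \<le> i \<and> i < n \<and> j < m \<longrightarrow> g' e i j p = \<infinity>))"

end

theory Submission
  imports Defs
begin

text \<open>
  Replace the transition data of E and F by cohomologous data in which E is block upper
  triangular with F in the upper-left block. A monomial matrix whose lower-left block vanishes
  (is \<infinity>) and whose upper-left block is monomial has a vanishing upper-right block as well,
  so the data of E are in fact block diagonal: E \<simeq> F \<oplus> H, where H is given by the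
  lower-right blocks. Conjugating by the constant permutation matrix exchanging the two blocks
  gives E \<simeq> H \<oplus> F, which exhibits H as a subbundle. This uses that cohomology is an
  equivalence relation compatible with direct sums, which holds because star sections
  (monomial matrices of harmonic functions) form a group under the min-plus product.
\<close>

section \<open>Min-plus products of matrices of functions\<close>

type_synonym 'p fmat = "nat \<Rightarrow> nat \<Rightarrow> 'p \<Rightarrow> ereal"

lemma INF_add_right_finite:
  fixes x :: "'a \<Rightarrow> ereal"
  assumes "finite K"
  shows "(INF k\<in>K. x k) + c = (INF k\<in>K. x k + c)"
proof (cases "K = {}")
  case True
  then show ?thesis by (simp add: top_ereal_def)
next
  case False
  have "mono (\<lambda>y::ereal. y + c)" by (auto intro: monoI add_right_mono)
  from mono_Min_commute[OF this] show ?thesis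
    using assms False by (simp add: cInf_eq_Min image_comp o_def)
qed

lemma INF_add_left_finite:
  fixes x :: "'a \<Rightarrow> ereal"
  assumes "finite K"
  shows "c + (INF k\<in>K. x k) = (INF k\<in>K. c + x k)"
  using INF_add_right_finite[OF assms, of x c] by (simp add: add.commute)

lemma INF_eq_if_others_infinity:
  fixes x :: "'a \<Rightarrow> ereal"
  assumes "k0 \<in> K" "\<And>k. k \<in> K \<Longrightarrow> k \<noteq> k0 \<Longrightarrow> x k = \<infinity>"
  shows "(INF k\<in>K. x k) = x k0"
proof -
  have "(INF k\<in>K. x k) = inf (x k0) (INF k\<in>K - {k0}. x k)"
    using assms(1) by (metis INF_insert insert_Diff)
  also have "(INF k\<in>K - {k0}. x k) = \<infinity>"
    using assms(2) by (simp add: top_ereal_def[symmetric])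
  finally show ?thesis by simp
qed

lemma tprod_assoc: "tprod n (tprod n A B) C i j p = tprod n A (tprod n B C) i j p"
proof -
  have "tprod n (tprod n A B) C i j p
        = (INF l\<in>{..<n}. INF k\<in>{..<n}. A i k p + B k l p + C l j p)"
    unfolding tprod_def by (simp add: INF_add_right_finite)
  also have "\<dots> = (INF k\<in>{..<n}. INF l\<in>{..<n}. A i k p + (B k l p + C l j p))"
    by (subst INF_commute) (simp add: add.assoc)
  also have "\<dots> = tprod n A (tprod n B C) i j p"
    unfolding tprod_def by (simp add: INF_add_left_finite)
  finally show ?thesis .
qed

definition perm_mat :: "(nat \<Rightarrow> nat) \<Rightarrow> 'p fmat" where
  "perm_mat \<sigma> i j p = (if j = \<sigma> i then 0 else \<infinity>)"

abbreviation tid :: "'p fmat" where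
  "tid \<equiv> perm_mat id"

text \<open>The inverse of a monomial matrix with real finite entries is its negated transpose.\<close>
definition tinv :: "'p fmat \<Rightarrow> 'p fmat" where
  "tinv A i j p = (if A j i p = \<infinity> then \<infinity> else - A j i p)"

definition block_diag :: "nat \<Rightarrow> 'p fmat \<Rightarrow> 'p fmat \<Rightarrow> 'p fmat" where
  "block_diag m A B i j = (if i < m \<and> j < m then A i j
                           else if m \<le> i \<and> m \<le> j then B (i - m) (j - m)
                           else (\<lambda>_. \<infinity>))"

lemma dsum_eq_block_diag: "dsum m g h e = block_diag m (g e) (h e)"
  by (simp add: fun_eq_iff dsum_def block_diag_def)

lemma tinv_tinv: "A i j p \<noteq> -\<infinity> \<Longrightarrow> tinv (tinv A) i j p = A i j p"
  by (cases "A i j p") (auto simp: tinv_def)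

lemma tprod_perm_mat_left:
  assumes "\<sigma> i < n"
  shows "tprod n (perm_mat \<sigma>) A i j p = A (\<sigma> i) j p"
  unfolding tprod_def using assms
  by (subst INF_eq_if_others_infinity[of "\<sigma> i"]) (auto simp: perm_mat_def)

lemma tprod_perm_mat_right:
  assumes "inj_on \<sigma> {..<n}" "l < n"
  shows "tprod n A (perm_mat \<sigma>) i (\<sigma> l) p = A i l p"
  unfolding tprod_def using assms
  by (subst INF_eq_if_others_infinity[of l]) (auto simp: perm_mat_def inj_on_def)

lemma tprod_tid_left: "i < n \<Longrightarrow> tprod n tid A i j p = A i j p"
  using tprod_perm_mat_left[of id] by simp

lemma tprod_tid_right: "j < n \<Longrightarrow> tprod n A tid i j p = A i j p"
  using tprod_perm_mat_right[of id n j] by simp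

lemma tprod_block_diag:
  assumes "m \<le> n" "i < n" "j < n"
  shows "tprod n (block_diag m A1 A2) (block_diag m B1 B2) i j p
         = block_diag m (tprod m A1 B1) (tprod (n - m) A2 B2) i j p"
proof -
  have "(\<lambda>k. k + m) ` {..<n - m} = {m..<n}"
    using assms(1) by (simp add: lessThan_atLeast0 image_add_atLeastLessThan)
  then have split: "{..<n} = {..<m} \<union> (\<lambda>k. k + m) ` {..<n - m}"
    using assms(1) by auto
  define X where "X = (INF k\<in>{..<m}. block_diag m A1 A2 i k p + block_diag m B1 B2 k j p)"
  define Y where
    "Y = (INF k\<in>{..<n - m}. block_diag m A1 A2 i (k + m) p + block_diag m B1 B2 (k + m) j p)"
  have top_add: "top + x = top" "x + top = top" for x :: ereal
    by (simp_all add: top_ereal_def)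
  have "tprod n (block_diag m A1 A2) (block_diag m B1 B2) i j p = inf X Y"
    unfolding tprod_def split INF_union X_def Y_def by (simp add: image_comp o_def)
  moreover have "X = (if i < m \<and> j < m then tprod m A1 B1 i j p else \<infinity>)"
    by (auto simp: X_def block_diag_def tprod_def top_add top_ereal_def[symmetric])
  moreover have "Y = (if m \<le> i \<and> m \<le> j then tprod (n - m) A2 B2 (i - m) (j - m) p else \<infinity>)"
    by (auto simp: Y_def block_diag_def tprod_def top_add top_ereal_def[symmetric])
  ultimately show ?thesis
    by (simp add: block_diag_def)
qed

definition mat_eq_at :: "nat \<Rightarrow> 'p \<Rightarrow> 'p fmat \<Rightarrow> 'p fmat \<Rightarrow> bool" where
  "mat_eq_at n p A B \<longleftrightarrow> (\<forall>i<n. \<forall>j<n. A i j p = B i j p)"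

lemma mat_eq_at_refl: "mat_eq_at n p A A"
  by (simp add: mat_eq_at_def)

lemma mat_eq_at_sym: "mat_eq_at n p A B \<Longrightarrow> mat_eq_at n p B A"
  by (simp add: mat_eq_at_def)

lemma mat_eq_at_trans [trans]: "mat_eq_at n p A B \<Longrightarrow> mat_eq_at n p B C \<Longrightarrow> mat_eq_at n p A C"
  by (simp add: mat_eq_at_def)

lemma mat_eq_at_tprod:
  "mat_eq_at n p A A' \<Longrightarrow> mat_eq_at n p B B' \<Longrightarrow> mat_eq_at n p (tprod n A B) (tprod n A' B')"
  unfolding mat_eq_at_def tprod_def by (auto intro!: INF_cong)

lemma mat_eq_at_tprod_assoc: "mat_eq_at n p (tprod n (tprod n A B) C) (tprod n A (tprod n B C))"
  by (simp add: mat_eq_at_def tprod_assoc)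

lemma mat_eq_at_tid_left: "mat_eq_at n p (tprod n tid A) A"
  by (simp add: mat_eq_at_def tprod_tid_left)

lemma mat_eq_at_tid_right: "mat_eq_at n p (tprod n A tid) A"
  by (simp add: mat_eq_at_def tprod_tid_right)

section \<open>Monomial matrices\<close>

definition ereal_lift_on :: "'p set \<Rightarrow> (('p \<Rightarrow> real) \<Rightarrow> bool) \<Rightarrow> ('p \<Rightarrow> ereal) \<Rightarrow> bool" where
  "ereal_lift_on S H f \<longleftrightarrow> (\<exists>h. H h \<and> (\<forall>p\<in>S. f p = ereal (h p)))"

lemma monomial_matD:
  assumes "monomial_mat n S P A"
  shows "\<And>i j. i < n \<Longrightarrow> j < n \<Longrightarrow> is_infinite_on S (A i j) \<or> P (A i j)"
    and "\<And>i. i < n \<Longrightarrow> \<exists>!j. j < n \<and> \<not> is_infinite_on S (A i j)"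
    and "\<And>j. j < n \<Longrightarrow> \<exists>!i. i < n \<and> \<not> is_infinite_on S (A i j)"
  using assms unfolding monomial_mat_def by blast+

lemma monomial_mat_entry_at:
  assumes "monomial_mat n S (ereal_lift_on S H) A" "i < n" "j < n" "p \<in> S"
  shows "A i j p \<noteq> -\<infinity>" and "A i j p = \<infinity> \<longleftrightarrow> is_infinite_on S (A i j)"
  using monomial_matD(1)[OF assms(1-3)] assms(4)
  by (auto simp: is_infinite_on_def ereal_lift_on_def)

lemma tprod_row_entry:
  assumes "monomial_mat n S P A" "i < n" "s < n" "\<not> is_infinite_on S (A i s)" "p \<in> S"
  shows "tprod n A B i j p = A i s p + B s j p"
proof -
  have "A i k p = \<infinity>" if "k < n" "k \<noteq> s" for k
    using monomial_matD(2)[OF assms(1,2)] assms(3-5) that unfolding is_infinite_on_def by blast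
  then show ?thesis
    unfolding tprod_def using assms(3) by (subst INF_eq_if_others_infinity[of s]) auto
qed

lemma tprod_tinv_right:
  assumes A: "monomial_mat n S (ereal_lift_on S H) A" and p: "p \<in> S"
  shows "mat_eq_at n p (tprod n A (tinv A)) tid"
  unfolding mat_eq_at_def
proof (intro allI impI)
  fix i j assume i: "i < n" and j: "j < n"
  obtain s where s: "s < n" "\<not> is_infinite_on S (A i s)"
    using monomial_matD(2)[OF A i] by blast
  have "tprod n A (tinv A) i j p = A i s p + tinv A s j p"
    by (rule tprod_row_entry[OF A i s p])
  also have "\<dots> = tid i j p"
  proof (cases "j = i")
    case True
    then show ?thesis
      using monomial_mat_entry_at[OF A i s(1) p] s(2)
      by (cases "A i s p") (auto simp: tinv_def perm_mat_def)
  next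
    case False
    then have "is_infinite_on S (A j s)"
      using monomial_matD(3)[OF A s(1)] s i j by blast
    then show ?thesis
      using False p by (simp add: tinv_def perm_mat_def is_infinite_on_def)
  qed
  finally show "tprod n A (tinv A) i j p = tid i j p" .
qed

lemma tprod_entry_monomial:
  assumes A: "monomial_mat n S (ereal_lift_on S H) A" and B: "monomial_mat n S (ereal_lift_on S H) B"
    and H_add: "\<And>h1 h2. H h1 \<Longrightarrow> H h2 \<Longrightarrow> H (\<lambda>p. h1 p + h2 p)"
    and i: "i < n" and s: "s < n" "\<not> is_infinite_on S (A i s)" and j: "j < n"
  shows "if is_infinite_on S (B s j) then is_infinite_on S (tprod n A B i j)
         else \<not> is_infinite_on S (tprod n A B i j) \<and> ereal_lift_on S H (tprod n A B i j)"
proof -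
  have prod: "tprod n A B i j p = A i s p + B s j p" if "p \<in> S" for p
    by (rule tprod_row_entry[OF A i s that])
  obtain h1 where h1: "H h1" "\<And>p. p \<in> S \<Longrightarrow> A i s p = ereal (h1 p)"
    using monomial_matD(1)[OF A i s(1)] s(2) unfolding ereal_lift_on_def by blast
  show ?thesis
  proof (cases "is_infinite_on S (B s j)")
    case True
    then show ?thesis using prod h1 by (simp add: is_infinite_on_def)
  next
    case False
    obtain h2 where h2: "H h2" "\<And>p. p \<in> S \<Longrightarrow> B s j p = ereal (h2 p)"
      using monomial_matD(1)[OF B s(1) j] False unfolding ereal_lift_on_def by blast
    have "ereal_lift_on S H (tprod n A B i j)"
      unfolding ereal_lift_on_def using prod h1 h2 H_add by (auto intro!: exI[of _ "\<lambda>p. h1 p + h2 p"])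
    moreover have "S \<noteq> {}" using s(2) by (auto simp: is_infinite_on_def)
    ultimately show ?thesis
      using False prod h1 h2 by (auto simp: is_infinite_on_def)
  qed
qed

lemma monomial_mat_tprod:
  assumes A: "monomial_mat n S (ereal_lift_on S H) A" and B: "monomial_mat n S (ereal_lift_on S H) B"
    and H_add: "\<And>h1 h2. H h1 \<Longrightarrow> H h2 \<Longrightarrow> H (\<lambda>p. h1 p + h2 p)"
  shows "monomial_mat n S (ereal_lift_on S H) (tprod n A B)"
proof -
  have entry: "if is_infinite_on S (B s j) then is_infinite_on S (tprod n A B i j)
         else \<not> is_infinite_on S (tprod n A B i j) \<and> ereal_lift_on S H (tprod n A B i j)"
    if "i < n" "s < n" "\<not> is_infinite_on S (A i s)" "j < n" for i s j
    by (rule tprod_entry_monomial[OF A B _ that]) (rule H_add)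
  have row_iff: "is_infinite_on S (tprod n A B i j) \<longleftrightarrow> is_infinite_on S (B s j)"
    if "i < n" "s < n" "\<not> is_infinite_on S (A i s)" "j < n" for i s j
    using entry[OF that] by (auto split: if_splits)
  show ?thesis
    unfolding monomial_mat_def
  proof (intro conjI allI impI)
    fix i j assume i: "i < n" and j: "j < n"
    obtain s where "s < n" "\<not> is_infinite_on S (A i s)"
      using monomial_matD(2)[OF A i] by blast
    from entry[OF i this j]
    show "is_infinite_on S (tprod n A B i j) \<or> ereal_lift_on S H (tprod n A B i j)"
      by (auto split: if_splits)
  next
    fix i assume i: "i < n"
    obtain s where s: "s < n" "\<not> is_infinite_on S (A i s)"
      using monomial_matD(2)[OF A i] by blast
    show "\<exists>!j. j < n \<and> \<not> is_infinite_on S (tprod n A B i j)"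
      using monomial_matD(2)[OF B s(1)] row_iff[OF i s] by blast
  next
    fix j assume j: "j < n"
    obtain s where s: "s < n" "\<not> is_infinite_on S (B s j)"
      and s_unique: "\<And>s'. s' < n \<Longrightarrow> \<not> is_infinite_on S (B s' j) \<Longrightarrow> s' = s"
      using monomial_matD(3)[OF B j] by blast
    obtain i where i: "i < n" "\<not> is_infinite_on S (A i s)"
      and i_unique: "\<And>i'. i' < n \<Longrightarrow> \<not> is_infinite_on S (A i' s) \<Longrightarrow> i' = i"
      using monomial_matD(3)[OF A s(1)] by blast
    show "\<exists>!i. i < n \<and> \<not> is_infinite_on S (tprod n A B i j)"
    proof (rule ex1I[of _ i])
      show "i < n \<and> \<not> is_infinite_on S (tprod n A B i j)"
        using row_iff[OF i(1) s(1) i(2) j] i s by blast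
    next
      fix i' assume i': "i' < n \<and> \<not> is_infinite_on S (tprod n A B i' j)"
      obtain s' where "s' < n" "\<not> is_infinite_on S (A i' s')"
        using monomial_matD(2)[OF A, of i'] i' by blast
      then show "i' = i"
        using row_iff[of i' s' j] i' j s_unique i_unique by metis
    qed
  qed
qed

lemma monomial_mat_tinv:
  assumes A: "monomial_mat n S (ereal_lift_on S H) A"
    and H_neg: "\<And>h. H h \<Longrightarrow> H (\<lambda>p. - h p)"
  shows "monomial_mat n S (ereal_lift_on S H) (tinv A)"
proof -
  have entry: "(is_infinite_on S (tinv A i j) \<longleftrightarrow> is_infinite_on S (A j i)) \<and>
      (is_infinite_on S (tinv A i j) \<or> ereal_lift_on S H (tinv A i j))"
    if ij: "i < n" "j < n" for i j
  proof (cases "is_infinite_on S (A j i)")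
    case True
    then show ?thesis by (simp add: is_infinite_on_def tinv_def)
  next
    case False
    then obtain h where h: "H h" "\<And>p. p \<in> S \<Longrightarrow> A j i p = ereal (h p)"
      using monomial_matD(1)[OF A ij(2,1)] unfolding ereal_lift_on_def by blast
    then have "ereal_lift_on S H (tinv A i j)"
      unfolding ereal_lift_on_def using H_neg by (auto simp: tinv_def intro!: exI[of _ "\<lambda>p. - h p"])
    then show ?thesis
      using False h by (auto simp: is_infinite_on_def tinv_def)
  qed
  show ?thesis
    unfolding monomial_mat_def
    using entry monomial_matD(2,3)[OF A] by (simp cong: conj_cong)
qed

lemma monomial_mat_perm_mat:
  assumes "S \<noteq> {}" and "H (\<lambda>_. 0)" and \<sigma>: "bij_betw \<sigma> {..<n} {..<n}"
  shows "monomial_mat n S (ereal_lift_on S H) (perm_mat \<sigma>)"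
  unfolding monomial_mat_def
proof (intro conjI allI impI)
  have infinite_iff: "is_infinite_on S (perm_mat \<sigma> i j) \<longleftrightarrow> j \<noteq> \<sigma> i" for i j
    using assms(1) by (auto simp: is_infinite_on_def perm_mat_def)
  fix i j
  show "is_infinite_on S (perm_mat \<sigma> i j) \<or> ereal_lift_on S H (perm_mat \<sigma> i j)"
    using assms(2) by (auto simp: infinite_iff ereal_lift_on_def perm_mat_def)
  show "i < n \<Longrightarrow> \<exists>!j. j < n \<and> \<not> is_infinite_on S (perm_mat \<sigma> i j)"
    using bij_betwE[OF \<sigma>] by (auto simp: infinite_iff intro!: ex1I[of _ "\<sigma> i"])
  show "j < n \<Longrightarrow> \<exists>!i. i < n \<and> \<not> is_infinite_on S (perm_mat \<sigma> i j)"
    using \<sigma> unfolding infinite_iff bij_betw_iff_bijections by (metis lessThan_iff)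
qed

lemma Ex1_shift_iff:
  "(\<exists>!j::nat. j < m + k \<and> m \<le> j \<and> Q (j - m)) \<longleftrightarrow> (\<exists>!j. j < k \<and> Q j)"
proof
  assume "\<exists>!j. j < m + k \<and> m \<le> j \<and> Q (j - m)"
  then obtain j where j: "j < m + k" "m \<le> j" "Q (j - m)"
    and unique: "\<And>j'. j' < m + k \<Longrightarrow> m \<le> j' \<Longrightarrow> Q (j' - m) \<Longrightarrow> j' = j"
    by blast
  show "\<exists>!j. j < k \<and> Q j"
  proof (rule ex1I[of _ "j - m"])
    fix j' assume "j' < k \<and> Q j'"
    then show "j' = j - m" using unique[of "j' + m"] by simp
  qed (use j in simp)
next
  assume "\<exists>!j. j < k \<and> Q j"
  then obtain j where j: "j < k" "Q j" and unique: "\<And>j'. j' < k \<Longrightarrow> Q j' \<Longrightarrow> j' = j"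
    by blast
  show "\<exists>!j. j < m + k \<and> m \<le> j \<and> Q (j - m)"
  proof (rule ex1I[of _ "j + m"])
    fix j' assume j': "j' < m + k \<and> m \<le> j' \<and> Q (j' - m)"
    then have "j' - m = j" using unique[of "j' - m"] by linarith
    with j' show "j' = j + m" by linarith
  qed (use j in simp)
qed

lemma monomial_mat_block_diag:
  assumes A: "monomial_mat m S P A" and B: "monomial_mat k S P B"
  shows "monomial_mat (m + k) S P (block_diag m A B)"
proof -
  have infinite_iff: "is_infinite_on S (block_diag m A B i j) \<longleftrightarrow>
      (if i < m \<and> j < m then is_infinite_on S (A i j)
       else if m \<le> i \<and> m \<le> j then is_infinite_on S (B (i - m) (j - m)) else True)" for i j
    by (simp add: block_diag_def is_infinite_on_def)
  show ?thesis
    unfolding monomial_mat_def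
  proof (intro conjI allI impI)
    fix i j assume "i < m + k" "j < m + k"
    then show "is_infinite_on S (block_diag m A B i j) \<or> P (block_diag m A B i j)"
      using monomial_matD(1)[OF A, of i j] monomial_matD(1)[OF B, of "i - m" "j - m"]
      by (auto simp: infinite_iff block_diag_def is_infinite_on_def)
  next
    fix i assume i: "i < m + k"
    show "\<exists>!j. j < m + k \<and> \<not> is_infinite_on S (block_diag m A B i j)"
    proof (cases "i < m")
      case True
      then have "(j < m + k \<and> \<not> is_infinite_on S (block_diag m A B i j)) \<longleftrightarrow>
          (j < m \<and> \<not> is_infinite_on S (A i j))" for j
        by (auto simp: infinite_iff)
      then show ?thesis using monomial_matD(2)[OF A True] by simp
    next
      case False
      then have "(j < m + k \<and> \<not> is_infinite_on S (block_diag m A B i j)) \<longleftrightarrow>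
          (j < m + k \<and> m \<le> j \<and> \<not> is_infinite_on S (B (i - m) (j - m)))" for j
        by (auto simp: infinite_iff)
      then show ?thesis using monomial_matD(2)[OF B, of "i - m"] i False
        by (simp add: Ex1_shift_iff[where Q="\<lambda>j. \<not> is_infinite_on S (B (i - m) j)"])
    qed
  next
    fix j assume j: "j < m + k"
    show "\<exists>!i. i < m + k \<and> \<not> is_infinite_on S (block_diag m A B i j)"
    proof (cases "j < m")
      case True
      then have "(i < m + k \<and> \<not> is_infinite_on S (block_diag m A B i j)) \<longleftrightarrow>
          (i < m \<and> \<not> is_infinite_on S (A i j))" for i
        by (auto simp: infinite_iff)
      then show ?thesis using monomial_matD(3)[OF A True] by simp
    next
      case False
      then have "(i < m + k \<and> \<not> is_infinite_on S (block_diag m A B i j)) \<longleftrightarrow>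
          (i < m + k \<and> m \<le> i \<and> \<not> is_infinite_on S (B (i - m) (j - m)))" for i
        by (auto simp: infinite_iff)
      then show ?thesis using monomial_matD(3)[OF B, of "j - m"] j False
        by (simp add: Ex1_shift_iff[where Q="\<lambda>i. \<not> is_infinite_on S (B i (j - m))"])
    qed
  qed
qed

text \<open>Each of the first m rows of A already has its finite entry in the upper-left block.\<close>
lemma monomial_mat_upper_right_infinite:
  assumes A: "monomial_mat n S P A" and B: "monomial_mat m S Q B"
    and upper_left: "\<And>i j p. i < m \<Longrightarrow> j < m \<Longrightarrow> p \<in> S \<Longrightarrow> A i j p = B i j p"
    and "m \<le> n" "i < m" "m \<le> j" "j < n"
  shows "is_infinite_on S (A i j)"
proof -
  obtain j' where "j' < m" "\<not> is_infinite_on S (B i j')"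
    using monomial_matD(2)[OF B \<open>i < m\<close>] by blast
  then have "\<not> is_infinite_on S (A i j')"
    using upper_left \<open>i < m\<close> by (simp add: is_infinite_on_def)
  then show ?thesis
    using monomial_matD(2)[OF A, of i] \<open>j' < m\<close> assms(4-7) by (metis less_le_trans not_le)
qed

lemma monomial_mat_lower_right_block:
  assumes A: "monomial_mat n S P A" and "m \<le> n"
    and lower_left: "\<And>i j. m \<le> i \<Longrightarrow> i < n \<Longrightarrow> j < m \<Longrightarrow> is_infinite_on S (A i j)"
    and upper_right: "\<And>i j. i < m \<Longrightarrow> m \<le> j \<Longrightarrow> j < n \<Longrightarrow> is_infinite_on S (A i j)"
  shows "monomial_mat (n - m) S P (\<lambda>i j. A (i + m) (j + m))"
  unfolding monomial_mat_def
proof (intro conjI allI impI)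
  fix i j assume "i < n - m" "j < n - m"
  then show "is_infinite_on S (A (i + m) (j + m)) \<or> P (A (i + m) (j + m))"
    using monomial_matD(1)[OF A] by simp
next
  fix i assume "i < n - m"
  then have "(j < m + (n - m) \<and> m \<le> j \<and> \<not> is_infinite_on S (A (i + m) (j - m + m))) \<longleftrightarrow>
      (j < n \<and> \<not> is_infinite_on S (A (i + m) j))" for j
    using lower_left[of "i + m" j] \<open>m \<le> n\<close> by (cases "j < m") auto
  then show "\<exists>!j. j < n - m \<and> \<not> is_infinite_on S (A (i + m) (j + m))"
    using monomial_matD(2)[OF A, of "i + m"] \<open>i < n - m\<close>
    by (subst Ex1_shift_iff[symmetric, where m=m]) simp
next
  fix j assume "j < n - m"
  then have "(i < m + (n - m) \<and> m \<le> i \<and> \<not> is_infinite_on S (A (i - m + m) (j + m))) \<longleftrightarrow>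
      (i < n \<and> \<not> is_infinite_on S (A i (j + m)))" for i
    using upper_right[of i "j + m"] \<open>m \<le> n\<close> by (cases "i < m") auto
  then show "\<exists>!i. i < n - m \<and> \<not> is_infinite_on S (A (i + m) (j + m))"
    using monomial_matD(3)[OF A, of "j + m"] \<open>j < n - m\<close>
    by (subst Ex1_shift_iff[symmetric, where m=m]) simp
qed

section \<open>Star sections\<close>

lemma harmonic_on_star_add:
  assumes "harmonic_on_star G v h1" "harmonic_on_star G v h2"
  shows "harmonic_on_star G v (\<lambda>p. h1 p + h2 p)"
proof -
  obtain c1 m1 where "(\<Sum>e\<in>incident G v. m1 e) = 0" "h1 (Vtx v) = c1"
      "\<forall>e\<in>incident G v. \<forall>t. 0 < t \<and> t < mlen G e \<longrightarrow> h1 (Ept e t) = c1 + of_int (m1 e) * dist_from G v e t"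
    using assms(1) unfolding harmonic_on_star_def by blast
  moreover obtain c2 m2 where "(\<Sum>e\<in>incident G v. m2 e) = 0" "h2 (Vtx v) = c2"
      "\<forall>e\<in>incident G v. \<forall>t. 0 < t \<and> t < mlen G e \<longrightarrow> h2 (Ept e t) = c2 + of_int (m2 e) * dist_from G v e t"
    using assms(2) unfolding harmonic_on_star_def by blast
  ultimately show ?thesis
    unfolding harmonic_on_star_def
    by (intro exI[of _ "c1 + c2"] exI[of _ "\<lambda>e. m1 e + m2 e"]) (simp add: sum.distrib algebra_simps)
qed

lemma harmonic_on_star_uminus:
  assumes "harmonic_on_star G v h"
  shows "harmonic_on_star G v (\<lambda>p. - h p)"
proof -
  obtain c m where "(\<Sum>e\<in>incident G v. m e) = 0" "h (Vtx v) = c"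
      "\<forall>e\<in>incident G v. \<forall>t. 0 < t \<and> t < mlen G e \<longrightarrow> h (Ept e t) = c + of_int (m e) * dist_from G v e t"
    using assms unfolding harmonic_on_star_def by blast
  then show ?thesis
    unfolding harmonic_on_star_def
    by (intro exI[of _ "- c"] exI[of _ "\<lambda>e. - m e"]) (simp add: sum_negf algebra_simps)
qed

lemma harmonic_on_star_zero: "harmonic_on_star G v (\<lambda>_. 0)"
  unfolding harmonic_on_star_def by (intro exI[of _ 0] exI[of _ "\<lambda>_. 0"]) simp

lemma star_nonempty: "star G v \<noteq> {}"
  by (auto simp: star_def)

lemma open_edge_subset_star:
  assumes "e \<in> mE G"
  shows "open_edge G e \<subseteq> star G (msrc G e)" and "open_edge G e \<subseteq> star G (mtgt G e)"
  using assms by (auto simp: star_def incident_def)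

lemma star_section_iff_monomial_mat:
  "star_section G n v A \<longleftrightarrow>
     monomial_mat n (star G v) (ereal_lift_on (star G v) (harmonic_on_star G v)) A"
  unfolding star_section_def ereal_lift_on_def ..

lemma star_section_tprod:
  "star_section G n v A \<Longrightarrow> star_section G n v B \<Longrightarrow> star_section G n v (tprod n A B)"
  unfolding star_section_iff_monomial_mat by (rule monomial_mat_tprod) (auto intro: harmonic_on_star_add)

lemma star_section_tinv: "star_section G n v A \<Longrightarrow> star_section G n v (tinv A)"
  unfolding star_section_iff_monomial_mat by (rule monomial_mat_tinv) (auto intro: harmonic_on_star_uminus)

lemma star_section_perm_mat: "bij_betw \<sigma> {..<n} {..<n} \<Longrightarrow> star_section G n v (perm_mat \<sigma>)"
  unfolding star_section_iff_monomial_mat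
  by (rule monomial_mat_perm_mat[where H="harmonic_on_star G v", OF star_nonempty harmonic_on_star_zero])

lemma star_section_tid: "star_section G n v tid"
  by (rule star_section_perm_mat) simp

lemma star_section_block_diag_tid:
  assumes "star_section G m v A" "m \<le> n"
  shows "star_section G n v (block_diag m A tid)"
  using monomial_mat_block_diag[of m _ _ A "n - m" tid] assms star_section_tid[of G "n - m" v]
  unfolding star_section_iff_monomial_mat by simp

lemma star_section_tprod_tinv_right:
  "star_section G n v A \<Longrightarrow> p \<in> star G v \<Longrightarrow> mat_eq_at n p (tprod n A (tinv A)) tid"
  unfolding star_section_iff_monomial_mat by (rule tprod_tinv_right)

lemma star_section_tprod_tinv_left:
  assumes A: "star_section G n v A" and p: "p \<in> star G v"
  shows "mat_eq_at n p (tprod n (tinv A) A) tid"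
proof -
  have "mat_eq_at n p A (tinv (tinv A))"
    using A p tinv_tinv monomial_mat_entry_at(1)
    unfolding mat_eq_at_def star_section_iff_monomial_mat by metis
  then have "mat_eq_at n p (tprod n (tinv A) A) (tprod n (tinv A) (tinv (tinv A)))"
    by (rule mat_eq_at_tprod[OF mat_eq_at_refl])
  also have "mat_eq_at n p \<dots> tid"
    by (rule star_section_tprod_tinv_right[OF star_section_tinv[OF A] p])
  finally show ?thesis .
qed

section \<open>Cohomologous transition data\<close>

lemma cohomologousI:
  assumes "\<And>v. v \<in> mV G \<Longrightarrow> star_section G n v (\<phi> v)"
    and "\<And>e p. e \<in> mE G \<Longrightarrow> p \<in> open_edge G e \<Longrightarrow>
           mat_eq_at n p (tprod n (b e) (\<phi> (msrc G e))) (tprod n (\<phi> (mtgt G e)) (a e))"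
  shows "cohomologous G n a b"
  using assms unfolding cohomologous_def mat_eq_at_def by blast

lemma cohomologousE:
  assumes "cohomologous G n a b"
  obtains \<phi> where "\<And>v. v \<in> mV G \<Longrightarrow> star_section G n v (\<phi> v)"
    and "\<And>e p. e \<in> mE G \<Longrightarrow> p \<in> open_edge G e \<Longrightarrow>
           mat_eq_at n p (tprod n (b e) (\<phi> (msrc G e))) (tprod n (\<phi> (mtgt G e)) (a e))"
  using assms unfolding cohomologous_def mat_eq_at_def by blast

lemma cohomologous_refl: "cohomologous G n a a"
proof (rule cohomologousI[where \<phi>="\<lambda>_. tid"])
  fix e p
  have "mat_eq_at n p (tprod n (a e) tid) (a e)" by (rule mat_eq_at_tid_right)
  also have "mat_eq_at n p (a e) (tprod n tid (a e))" by (rule mat_eq_at_sym[OF mat_eq_at_tid_left])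
  finally show "mat_eq_at n p (tprod n (a e) tid) (tprod n tid (a e))" .
qed (rule star_section_tid)

lemma cohomologous_cong:
  assumes "cohomologous G n a b"
    and "\<And>e p. e \<in> mE G \<Longrightarrow> p \<in> open_edge G e \<Longrightarrow> mat_eq_at n p (b e) (b' e)"
  shows "cohomologous G n a b'"
proof -
  obtain \<phi> where \<phi>: "\<And>v. v \<in> mV G \<Longrightarrow> star_section G n v (\<phi> v)"
    and eq: "\<And>e p. e \<in> mE G \<Longrightarrow> p \<in> open_edge G e \<Longrightarrow>
           mat_eq_at n p (tprod n (b e) (\<phi> (msrc G e))) (tprod n (\<phi> (mtgt G e)) (a e))"
    using assms(1) by (metis cohomologousE)
  show ?thesis
  proof (rule cohomologousI[OF \<phi>])
    fix e p assume e: "e \<in> mE G" and p: "p \<in> open_edge G e"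
    have "mat_eq_at n p (tprod n (b' e) (\<phi> (msrc G e))) (tprod n (b e) (\<phi> (msrc G e)))"
      by (rule mat_eq_at_tprod[OF mat_eq_at_sym[OF assms(2)[OF e p]] mat_eq_at_refl])
    also have "mat_eq_at n p \<dots> (tprod n (\<phi> (mtgt G e)) (a e))"
      by (rule eq[OF e p])
    finally show "mat_eq_at n p (tprod n (b' e) (\<phi> (msrc G e))) (tprod n (\<phi> (mtgt G e)) (a e))" .
  qed
qed

lemma cohomologous_trans:
  assumes "cohomologous G n a b" "cohomologous G n b c"
  shows "cohomologous G n a c"
proof -
  obtain \<phi> where \<phi>: "\<And>v. v \<in> mV G \<Longrightarrow> star_section G n v (\<phi> v)"
    and eq1: "\<And>e p. e \<in> mE G \<Longrightarrow> p \<in> open_edge G e \<Longrightarrow>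
           mat_eq_at n p (tprod n (b e) (\<phi> (msrc G e))) (tprod n (\<phi> (mtgt G e)) (a e))"
    using assms(1) by (metis cohomologousE)
  obtain \<psi> where \<psi>: "\<And>v. v \<in> mV G \<Longrightarrow> star_section G n v (\<psi> v)"
    and eq2: "\<And>e p. e \<in> mE G \<Longrightarrow> p \<in> open_edge G e \<Longrightarrow>
           mat_eq_at n p (tprod n (c e) (\<psi> (msrc G e))) (tprod n (\<psi> (mtgt G e)) (b e))"
    using assms(2) by (metis cohomologousE)
  show ?thesis
  proof (rule cohomologousI[where \<phi>="\<lambda>v. tprod n (\<psi> v) (\<phi> v)"])
    fix v assume "v \<in> mV G"
    then show "star_section G n v (tprod n (\<psi> v) (\<phi> v))"
      using \<phi> \<psi> by (blast intro: star_section_tprod)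
  next
    fix e p assume e: "e \<in> mE G" and p: "p \<in> open_edge G e"
    let ?s = "msrc G e" and ?t = "mtgt G e"
    have "mat_eq_at n p (tprod n (c e) (tprod n (\<psi> ?s) (\<phi> ?s)))
        (tprod n (tprod n (c e) (\<psi> ?s)) (\<phi> ?s))"
      by (rule mat_eq_at_sym[OF mat_eq_at_tprod_assoc])
    also have "mat_eq_at n p \<dots> (tprod n (tprod n (\<psi> ?t) (b e)) (\<phi> ?s))"
      by (rule mat_eq_at_tprod[OF eq2[OF e p] mat_eq_at_refl])
    also have "mat_eq_at n p \<dots> (tprod n (\<psi> ?t) (tprod n (b e) (\<phi> ?s)))"
      by (rule mat_eq_at_tprod_assoc)
    also have "mat_eq_at n p \<dots> (tprod n (\<psi> ?t) (tprod n (\<phi> ?t) (a e)))"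
      by (rule mat_eq_at_tprod[OF mat_eq_at_refl eq1[OF e p]])
    also have "mat_eq_at n p \<dots> (tprod n (tprod n (\<psi> ?t) (\<phi> ?t)) (a e))"
      by (rule mat_eq_at_sym[OF mat_eq_at_tprod_assoc])
    finally show "mat_eq_at n p (tprod n (c e) (tprod n (\<psi> ?s) (\<phi> ?s)))
        (tprod n (tprod n (\<psi> ?t) (\<phi> ?t)) (a e))" .
  qed
qed

lemma cohomologous_sym:
  assumes endpoints: "\<And>e. e \<in> mE G \<Longrightarrow> msrc G e \<in> mV G \<and> mtgt G e \<in> mV G"
    and "cohomologous G n a b"
  shows "cohomologous G n b a"
proof -
  obtain \<phi> where \<phi>: "\<And>v. v \<in> mV G \<Longrightarrow> star_section G n v (\<phi> v)"
    and eq: "\<And>e p. e \<in> mE G \<Longrightarrow> p \<in> open_edge G e \<Longrightarrow>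
           mat_eq_at n p (tprod n (b e) (\<phi> (msrc G e))) (tprod n (\<phi> (mtgt G e)) (a e))"
    using assms(2) by (metis cohomologousE)
  show ?thesis
  proof (rule cohomologousI[where \<phi>="\<lambda>v. tinv (\<phi> v)"])
    fix v assume "v \<in> mV G"
    then show "star_section G n v (tinv (\<phi> v))" by (rule star_section_tinv[OF \<phi>])
  next
    fix e p assume e: "e \<in> mE G" and p: "p \<in> open_edge G e"
    let ?\<phi>s = "\<phi> (msrc G e)" and ?\<phi>t = "\<phi> (mtgt G e)"
    have inv_s: "mat_eq_at n p (tprod n ?\<phi>s (tinv ?\<phi>s)) tid"
      using star_section_tprod_tinv_right[OF \<phi>] endpoints[OF e] open_edge_subset_star(1)[OF e] p
      by blast
    have inv_t: "mat_eq_at n p (tprod n (tinv ?\<phi>t) ?\<phi>t) tid"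
      using star_section_tprod_tinv_left[OF \<phi>] endpoints[OF e] open_edge_subset_star(2)[OF e] p
      by blast
    have "mat_eq_at n p (a e) (tprod n (tprod n (tinv ?\<phi>t) ?\<phi>t) (a e))"
      by (rule mat_eq_at_trans[OF mat_eq_at_sym[OF mat_eq_at_tid_left]
            mat_eq_at_tprod[OF mat_eq_at_sym[OF inv_t] mat_eq_at_refl]])
    then have "mat_eq_at n p (tprod n (a e) (tinv ?\<phi>s))
        (tprod n (tprod n (tprod n (tinv ?\<phi>t) ?\<phi>t) (a e)) (tinv ?\<phi>s))"
      by (rule mat_eq_at_tprod[OF _ mat_eq_at_refl])
    also have "mat_eq_at n p \<dots> (tprod n (tprod n (tinv ?\<phi>t) (tprod n ?\<phi>t (a e))) (tinv ?\<phi>s))"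
      by (rule mat_eq_at_tprod[OF mat_eq_at_tprod_assoc mat_eq_at_refl])
    also have "mat_eq_at n p \<dots> (tprod n (tprod n (tinv ?\<phi>t) (tprod n (b e) ?\<phi>s)) (tinv ?\<phi>s))"
      by (rule mat_eq_at_tprod[OF mat_eq_at_tprod[OF mat_eq_at_refl mat_eq_at_sym[OF eq[OF e p]]]
            mat_eq_at_refl])
    also have "mat_eq_at n p \<dots> (tprod n (tinv ?\<phi>t) (tprod n (tprod n (b e) ?\<phi>s) (tinv ?\<phi>s)))"
      by (rule mat_eq_at_tprod_assoc)
    also have "mat_eq_at n p \<dots> (tprod n (tinv ?\<phi>t) (tprod n (b e) (tprod n ?\<phi>s (tinv ?\<phi>s))))"
      by (rule mat_eq_at_tprod[OF mat_eq_at_refl mat_eq_at_tprod_assoc])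
    also have "mat_eq_at n p \<dots> (tprod n (tinv ?\<phi>t) (tprod n (b e) tid))"
      by (rule mat_eq_at_tprod[OF mat_eq_at_refl mat_eq_at_tprod[OF mat_eq_at_refl inv_s]])
    also have "mat_eq_at n p \<dots> (tprod n (tinv ?\<phi>t) (b e))"
      by (rule mat_eq_at_tprod[OF mat_eq_at_refl mat_eq_at_tid_right])
    finally show "mat_eq_at n p (tprod n (a e) (tinv ?\<phi>s)) (tprod n (tinv ?\<phi>t) (b e))" .
  qed
qed

lemma cohomologous_dsum_left:
  assumes "m \<le> n" and "cohomologous G m a b"
  shows "cohomologous G n (dsum m a h) (dsum m b h)"
proof -
  obtain \<phi> where \<phi>: "\<And>v. v \<in> mV G \<Longrightarrow> star_section G m v (\<phi> v)"
    and eq: "\<And>e p. e \<in> mE G \<Longrightarrow> p \<in> open_edge G e \<Longrightarrow>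
           mat_eq_at m p (tprod m (b e) (\<phi> (msrc G e))) (tprod m (\<phi> (mtgt G e)) (a e))"
    using assms(2) by (metis cohomologousE)
  show ?thesis
  proof (rule cohomologousI[where \<phi>="\<lambda>v. block_diag m (\<phi> v) tid"])
    fix v assume "v \<in> mV G"
    then show "star_section G n v (block_diag m (\<phi> v) tid)"
      using star_section_block_diag_tid[OF \<phi> assms(1)] by blast
  next
    fix e p assume e: "e \<in> mE G" and p: "p \<in> open_edge G e"
    show "mat_eq_at n p (tprod n (dsum m b h e) (block_diag m (\<phi> (msrc G e)) tid))
                        (tprod n (block_diag m (\<phi> (mtgt G e)) tid) (dsum m a h e))"
      using eq[OF e p] assms(1)
      by (auto simp: mat_eq_at_def dsum_eq_block_diag tprod_block_diag block_diag_def
          tprod_tid_left tprod_tid_right)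
  qed
qed

lemma cohomologous_perm_conj:
  assumes \<sigma>: "bij_betw \<sigma> {..<n} {..<n}"
  shows "cohomologous G n a (\<lambda>e i j. a e (\<sigma> i) (\<sigma> j))"
proof (rule cohomologousI[where \<phi>="\<lambda>_. perm_mat \<sigma>"])
  fix v show "star_section G n v (perm_mat \<sigma>)" by (rule star_section_perm_mat[OF \<sigma>])
next
  fix e p
  show "mat_eq_at n p (tprod n (\<lambda>i j. a e (\<sigma> i) (\<sigma> j)) (perm_mat \<sigma>))
      (tprod n (perm_mat \<sigma>) (a e))"
    unfolding mat_eq_at_def
  proof (intro allI impI)
    fix i j assume "i < n" "j < n"
    then obtain l where "l < n" "j = \<sigma> l"
      using \<sigma> by (auto simp: bij_betw_def)
    moreover have "\<sigma> i < n"
      using bij_betwE[OF \<sigma>] \<open>i < n\<close> by simp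
    ultimately show "tprod n (\<lambda>i j. a e (\<sigma> i) (\<sigma> j)) (perm_mat \<sigma>) i j p
        = tprod n (perm_mat \<sigma>) (a e) i j p"
      using \<sigma> by (simp add: tprod_perm_mat_right tprod_perm_mat_left bij_betw_def)
  qed
qed

lemma cohomologous_dsum_swap: "cohomologous G (m + k) (dsum m a b) (dsum k b a)"
proof -
  define \<sigma> where "\<sigma> i = (if i < k then i + m else i - k)" for i
  have "bij_betw \<sigma> {..<m + k} {..<m + k}"
    by (rule bij_betw_byWitness[where f'="\<lambda>j. if j < m then j + k else j - m"]) (auto simp: \<sigma>_def)
  then have "cohomologous G (m + k) (dsum m a b) (\<lambda>e i j. dsum m a b e (\<sigma> i) (\<sigma> j))"
    by (rule cohomologous_perm_conj)
  then show ?thesis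
    by (rule cohomologous_cong) (auto simp: mat_eq_at_def dsum_def \<sigma>_def)
qed

section \<open>Complements of subbundles\<close>

lemma subbundle_block_diagonal_form:
  assumes "subbundle G m f n g"
  obtains f' h where "m \<le> n" "trans_data G (n - m) h"
    "cohomologous G m f f'" "cohomologous G n g (dsum m f' h)"
proof -
  obtain f' g' where mn: "m \<le> n" and f': "trans_data G m f'" and g': "trans_data G n g'"
    and ff': "cohomologous G m f f'" and gg': "cohomologous G n g g'"
    and upper_left: "\<forall>e\<in>mE G. \<forall>p\<in>open_edge G e. \<forall>i<m. \<forall>j<m. g' e i j p = f' e i j p"
    and lower_left: "\<forall>e\<in>mE G. \<forall>p\<in>open_edge G e. \<forall>i j.
                       m \<le> i \<and> i < n \<and> j < m \<longrightarrow> g' e i j p = \<infinity>"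
    using assms unfolding subbundle_def by blast
  define h where "h e i j = g' e (i + m) (j + m)" for e i j
  have g'_mono: "monomial_mat n (open_edge G e) (int_affine_on_edge G e) (g' e)"
    and f'_mono: "monomial_mat m (open_edge G e) (int_affine_on_edge G e) (f' e)"
    if "e \<in> mE G" for e
    using g' f' that unfolding trans_data_def by blast+
  have upper_right: "is_infinite_on (open_edge G e) (g' e i j)"
    if "e \<in> mE G" "i < m" "m \<le> j" "j < n" for e i j
    using g'_mono f'_mono upper_left mn that by (blast intro: monomial_mat_upper_right_infinite)
  have "trans_data G (n - m) h"
    unfolding trans_data_def h_def
  proof
    fix e assume e: "e \<in> mE G"
    show "monomial_mat (n - m) (open_edge G e) (int_affine_on_edge G e)
            (\<lambda>i j. g' e (i + m) (j + m))"
      using lower_left e upper_right[OF e]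
      by (intro monomial_mat_lower_right_block[OF g'_mono[OF e] mn]) (auto simp: is_infinite_on_def)
  qed
  moreover have "cohomologous G n g (dsum m f' h)"
  proof (rule cohomologous_cong[OF gg'])
    fix e p assume e: "e \<in> mE G" and p: "p \<in> open_edge G e"
    have "g' e i j p = \<infinity>" if "i < m" "m \<le> j" "j < n" for i j
      using upper_right[OF e that] p by (simp add: is_infinite_on_def)
    then show "mat_eq_at n p (g' e) (dsum m f' h e)"
      using upper_left lower_left e p by (auto simp: mat_eq_at_def dsum_def h_def)
  qed
  ultimately show thesis
    using that mn ff' by blast
qed

lemma subbundle_if_cohomologous_dsum:
  assumes h: "trans_data G k h" and f: "trans_data G m f"
    and "cohomologous G (k + m) g (dsum k h f)"
  shows "subbundle G k h (k + m) g"
  unfolding subbundle_def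
proof (intro conjI exI)
  show "trans_data G (k + m) (dsum k h f)"
    using monomial_mat_block_diag h f unfolding trans_data_def dsum_eq_block_diag by blast
  show "cohomologous G (k + m) g (dsum k h f)"
    by (rule assms(3))
qed (auto simp: dsum_def intro: cohomologous_refl h)

theorem proposition2p5:
  fixes G :: "('v, 'e) osmodel" and m n :: nat and f g :: "'e \<Rightarrow> ('v, 'e) tmat"
  assumes "oriented_simple_model G"
    and "trans_data G n g"
    and "trans_data G m f"
    and "subbundle G m f n g"
  shows "\<exists>k h. trans_data G k h \<and> subbundle G k h n g \<and> m + k = n \<and>
               cohomologous G n g (dsum m f h)"
proof -
  have endpoints: "\<And>e. e \<in> mE G \<Longrightarrow> msrc G e \<in> mV G \<and> mtgt G e \<in> mV G"
    using assms(1) unfolding oriented_simple_model_def by blast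
  obtain f' h where mn: "m \<le> n" and h: "trans_data G (n - m) h"
    and ff': "cohomologous G m f f'" and g_f'h: "cohomologous G n g (dsum m f' h)"
    using assms(4) by (metis subbundle_block_diagonal_form)
  have "cohomologous G n (dsum m f' h) (dsum m f h)"
    by (rule cohomologous_dsum_left[OF mn cohomologous_sym[OF endpoints ff']])
  with g_f'h have g_fh: "cohomologous G n g (dsum m f h)"
    by (rule cohomologous_trans)
  moreover have "cohomologous G n (dsum m f h) (dsum (n - m) h f)"
    using cohomologous_dsum_swap[of G m "n - m" f h] mn by simp
  with g_fh have "cohomologous G n g (dsum (n - m) h f)"
    by (rule cohomologous_trans)
  then have "subbundle G (n - m) h n g"
    using subbundle_if_cohomologous_dsum[OF h assms(3)] mn by simp
  ultimately show ?thesis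
    using h mn by (intro exI[of _ "n - m"] exI[of _ h]) simp
qed

end
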